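(* Let $E$ be a connected graded Frobenius algebra with top degree $l$, $\mathfrak e$ a basis of $E_l$, $\{a_1,\dots,a_n\}$ a basis of $E_1$, $\{b_i\}$ the basis of $E_{l-1}$ with $a_ib_j=\delta_{ij}\mathfrak e$, $\{c_i\}$ the basis of $E_1$ with $b_ic_j=\delta_{ij}\mathfrak e$, and $\alpha=(\alpha_{ij})$ the invertible matrix with $c_i=\sum_j\alpha_{ij}a_j$. Let $K$ be a Hopf algebra with antipode $S$ such that $E$ is a left $K$-comodule algebra via a grading-preserving coaction $\rho$, and write $\rho(a_i)=\sum_s y_{is}\otimes a_s$, $\rho(b_i)=\sum_s f_{is}\otimes b_s$, $\rho(c_i)=\sum_s g_{is}\otimes c_s$, $\rho(\mathfrak e)={\sf D}\otimes\mathfrak e$. Let $\mathbb Y=(y_{ij})$, $\mathbb F=(f_{ij})$, $\mathbb G=(g_{ij})$, and $\mathbb I$ the $n\times n$ identity matrix. Then: (a) $\mathbb YS(\mathbb Y)=\mathbb I=S(\mathbb Y)\mathbb Y$; (b) $\mathbb GS(\mathbb G)=\mathbb I=S(\mathbb G)\mathbb G$; (c) $\mathbb Y\mathbb F^\tau={\sf D}\mathbb I$, and consequently $S(\mathbb Y)=\mathbb F^\tau({\sf D}^{-1}\mathbb I)$; (d) $S(\mathbb F)S(\mathbb Y^\tau)={\sf D}^{-1}\mathbb I$; (e) $S(\mathbb G)S(\mathbb F^\tau)={\sf D}^{-1}\mathbb I$, and consequently $S(\mathbb F^\tau)\,{\sf D}\mathbb I=\mathbb G$; (f) $S^2(\mathbb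 Y)={\sf D}\mathbb I\cdot\mathbb G\cdot{\sf D}^{-1}\mathbb I$; (g) $\mathbb G=\alpha\mathbb Y\alpha^{-1}$.
   Context: A connected graded algebra $E$ is Frobenius if finite dimensional with a nondegenerate associative bilinear form of some degree; then the top nonzero degree $E_l$ is one-dimensional and multiplication gives nondegenerate pairings $E_i\times E_{l-i}\to E_l$, so the bases $\{b_i\},\{c_i\}$ exist uniquely. The element ${\sf D}$ (the homological codeterminant of the coaction) is grouplike, hence invertible with $S({\sf D})={\sf D}^{-1}$. Matrices have entries in $K$, are multiplied by $(XY)_{ij}=\sum_sX_{is}Y_{sj}$, $S(X)$ means applying $S$ entrywise, $X^\tau$ is the transpose, and ${\sf D}\mathbb I$ is the diagonal matrix with entries ${\sf D}$. *)

theory Defs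
  imports Complex_Main
begin

definition algebra_over :: "('f::field \<Rightarrow> 'a::ring_1 \<Rightarrow> 'a) \<Rightarrow> bool" where
  "algebra_over sc \<longleftrightarrow> Vector_Spaces.vector_space sc \<and>
     (\<forall>c x y. sc c (x * y) = sc c x * y \<and> sc c (x * y) = x * sc c y)"

text \<open>An element of V (x) W is represented by a list of pairs, meaning the sum of the
  corresponding pure tensors. Two representatives denote the same element of the
  tensor product over the field iff all products of linear functionals agree on them
  (linear functionals separate points of a tensor product of vector spaces).\<close>

definition tens_eq2 ::
  "('f::field \<Rightarrow> 'a \<Rightarrow> 'a::ab_group_add) \<Rightarrow> ('f \<Rightarrow> 'b \<Rightarrow> 'b::ab_group_add)
   \<Rightarrow> ('a \<times> 'b) list \<Rightarrow> ('a \<times> 'b) list \<Rightarrow> bool" where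
  "tens_eq2 s1 s2 L M \<longleftrightarrow>
     (\<forall>\<phi> \<psi>. Vector_Spaces.linear s1 (*) \<phi> \<and> Vector_Spaces.linear s2 (*) \<psi> \<longrightarrow>
        (\<Sum>(x,y)\<leftarrow>L. \<phi> x * \<psi> y) = (\<Sum>(x,y)\<leftarrow>M. \<phi> x * \<psi> y))"

definition tens_eq3 ::
  "('f::field \<Rightarrow> 'a \<Rightarrow> 'a::ab_group_add) \<Rightarrow> ('f \<Rightarrow> 'b \<Rightarrow> 'b::ab_group_add)
   \<Rightarrow> ('f \<Rightarrow> 'c \<Rightarrow> 'c::ab_group_add)
   \<Rightarrow> ('a \<times> 'b \<times> 'c) list \<Rightarrow> ('a \<times> 'b \<times> 'c) list \<Rightarrow> bool" where
  "tens_eq3 s1 s2 s3 L M \<longleftrightarrow>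
     (\<forall>\<phi> \<psi> \<chi>. Vector_Spaces.linear s1 (*) \<phi> \<and> Vector_Spaces.linear s2 (*) \<psi> \<and> Vector_Spaces.linear s3 (*) \<chi> \<longrightarrow>
        (\<Sum>(x,y,z)\<leftarrow>L. \<phi> x * \<psi> y * \<chi> z) = (\<Sum>(x,y,z)\<leftarrow>M. \<phi> x * \<psi> y * \<chi> z))"

definition tens_mult :: "('a::times \<times> 'b::times) list \<Rightarrow> ('a \<times> 'b) list \<Rightarrow> ('a \<times> 'b) list" where
  "tens_mult L M = concat (map (\<lambda>(a,b). map (\<lambda>(c,d). (a * c, b * d)) M) L)"

definition tens_left :: "('a \<Rightarrow> ('b \<times> 'c) list) \<Rightarrow> ('a \<times> 'd) list \<Rightarrow> ('b \<times> 'c \<times> 'd) list" where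
  "tens_left f L = concat (map (\<lambda>(a,d). map (\<lambda>(b,c). (b,c,d)) (f a)) L)"

definition tens_right :: "('d \<Rightarrow> ('b \<times> 'c) list) \<Rightarrow> ('a \<times> 'd) list \<Rightarrow> ('a \<times> 'b \<times> 'c) list" where
  "tens_right g L = concat (map (\<lambda>(a,d). map (\<lambda>(b,c). (a,b,c)) (g d)) L)"

definition hopf_algebra ::
  "('f::field \<Rightarrow> 'k::ring_1 \<Rightarrow> 'k) \<Rightarrow> ('k \<Rightarrow> ('k \<times> 'k) list) \<Rightarrow> ('k \<Rightarrow> 'f) \<Rightarrow> ('k \<Rightarrow> 'k) \<Rightarrow> bool"
where
  "hopf_algebra sK \<Delta> \<epsilon> S \<longleftrightarrow>
     algebra_over sK \<and>
     \<comment> \<open>Delta is linear\<close>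
     (\<forall>x y. tens_eq2 sK sK (\<Delta> (x + y)) (\<Delta> x @ \<Delta> y)) \<and>
     (\<forall>c x. tens_eq2 sK sK (\<Delta> (sK c x)) (map (\<lambda>(a,b). (sK c a, b)) (\<Delta> x))) \<and>
     \<comment> \<open>coassociativity\<close>
     (\<forall>x. tens_eq3 sK sK sK (tens_left \<Delta> (\<Delta> x)) (tens_right \<Delta> (\<Delta> x))) \<and>
     \<comment> \<open>counit\<close>
     Vector_Spaces.linear sK (*) \<epsilon> \<and>
     (\<forall>x. (\<Sum>(a,b)\<leftarrow>\<Delta> x. sK (\<epsilon> a) b) = x) \<and>
     (\<forall>x. (\<Sum>(a,b)\<leftarrow>\<Delta> x. sK (\<epsilon> b) a) = x) \<and>
     \<comment> \<open>Delta and eps are algebra maps\<close>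
     (\<forall>x y. tens_eq2 sK sK (\<Delta> (x * y)) (tens_mult (\<Delta> x) (\<Delta> y))) \<and>
     tens_eq2 sK sK (\<Delta> 1) [(1, 1)] \<and>
     (\<forall>x y. \<epsilon> (x * y) = \<epsilon> x * \<epsilon> y) \<and> \<epsilon> 1 = 1 \<and>
     \<comment> \<open>antipode\<close>
     Vector_Spaces.linear sK sK S \<and>
     (\<forall>x. (\<Sum>(a,b)\<leftarrow>\<Delta> x. S a * b) = sK (\<epsilon> x) 1) \<and>
     (\<forall>x. (\<Sum>(a,b)\<leftarrow>\<Delta> x. a * S b) = sK (\<epsilon> x) 1)"

definition graded_algebra :: "('f::field \<Rightarrow> 'e::ring_1 \<Rightarrow> 'e) \<Rightarrow> (nat \<Rightarrow> 'e set) \<Rightarrow> bool" where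
  "graded_algebra sE Egr \<longleftrightarrow> algebra_over sE \<and>
     (\<forall>i. module.subspace sE (Egr i)) \<and>
     (\<forall>i j x y. x \<in> Egr i \<and> y \<in> Egr j \<longrightarrow> x * y \<in> Egr (i + j)) \<and>
     1 \<in> Egr 0 \<and>
     (\<forall>x. \<exists>!h. (\<forall>i. h i \<in> Egr i) \<and> finite {i. h i \<noteq> 0} \<and> x = (\<Sum>i\<in>{i. h i \<noteq> 0}. h i))"

definition connected_graded_algebra :: "('f::field \<Rightarrow> 'e::ring_1 \<Rightarrow> 'e) \<Rightarrow> (nat \<Rightarrow> 'e set) \<Rightarrow> bool" where
  "connected_graded_algebra sE Egr \<longleftrightarrow> graded_algebra sE Egr \<and> Egr 0 = range (\<lambda>c. sE c 1)"

definition graded_frobenius :: "('f::field \<Rightarrow> 'e::ring_1 \<Rightarrow> 'e) \<Rightarrow> (nat \<Rightarrow> 'e set) \<Rightarrow> bool" where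
  "graded_frobenius sE Egr \<longleftrightarrow>
     (\<exists>B. finite B \<and> module.span sE B = UNIV) \<and>
     (\<exists>(form :: 'e \<Rightarrow> 'e \<Rightarrow> 'f) d.
        (\<forall>y. Vector_Spaces.linear sE (*) (\<lambda>x. form x y)) \<and> (\<forall>x. Vector_Spaces.linear sE (*) (\<lambda>y. form x y)) \<and>
        (\<forall>x y z. form (x * y) z = form x (y * z)) \<and>
        (\<forall>x. (\<forall>y. form x y = 0) \<longrightarrow> x = 0) \<and>
        (\<forall>y. (\<forall>x. form x y = 0) \<longrightarrow> y = 0) \<and>
        (\<forall>i j x y. x \<in> Egr i \<and> y \<in> Egr j \<and> i + j \<noteq> d \<longrightarrow> form x y = 0))"

definition top_degree :: "(nat \<Rightarrow> 'e::zero set) \<Rightarrow> nat \<Rightarrow> bool" where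
  "top_degree Egr l \<longleftrightarrow> Egr l \<noteq> {0} \<and> (\<forall>i>l. Egr i = {0})"

definition is_basis_of :: "('f::field \<Rightarrow> 'e::ab_group_add \<Rightarrow> 'e) \<Rightarrow> 'e set \<Rightarrow> (nat \<Rightarrow> 'e) \<Rightarrow> nat \<Rightarrow> bool" where
  "is_basis_of sE V v n \<longleftrightarrow> (\<forall>i<n. v i \<in> V) \<and> inj_on v {..<n} \<and>
     module.independent sE (v ` {..<n}) \<and> module.span sE (v ` {..<n}) = V"

definition graded_comodule_algebra ::
  "('f::field \<Rightarrow> 'k::ring_1 \<Rightarrow> 'k) \<Rightarrow> ('k \<Rightarrow> ('k \<times> 'k) list) \<Rightarrow> ('k \<Rightarrow> 'f)
   \<Rightarrow> ('f \<Rightarrow> 'e::ring_1 \<Rightarrow> 'e) \<Rightarrow> (nat \<Rightarrow> 'e set) \<Rightarrow> ('e \<Rightarrow> ('k \<times> 'e) list) \<Rightarrow> bool"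
where
  "graded_comodule_algebra sK \<Delta> \<epsilon> sE Egr \<rho> \<longleftrightarrow>
     (\<forall>x y. tens_eq2 sK sE (\<rho> (x + y)) (\<rho> x @ \<rho> y)) \<and>
     (\<forall>c x. tens_eq2 sK sE (\<rho> (sE c x)) (map (\<lambda>(a,b). (a, sE c b)) (\<rho> x))) \<and>
     (\<forall>x. tens_eq3 sK sK sE (tens_left \<Delta> (\<rho> x)) (tens_right \<rho> (\<rho> x))) \<and>
     (\<forall>x. (\<Sum>(a,b)\<leftarrow>\<rho> x. sE (\<epsilon> a) b) = x) \<and>
     (\<forall>x y. tens_eq2 sK sE (\<rho> (x * y)) (tens_mult (\<rho> x) (\<rho> y))) \<and>
     tens_eq2 sK sE (\<rho> 1) [(1, 1)] \<and>
     (\<forall>i x. x \<in> Egr i \<longrightarrow> (\<exists>L. tens_eq2 sK sE (\<rho> x) L \<and> (\<forall>(a,b)\<in>set L. b \<in> Egr i)))"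

definition mat_eq :: "nat \<Rightarrow> (nat \<Rightarrow> nat \<Rightarrow> 'a) \<Rightarrow> (nat \<Rightarrow> nat \<Rightarrow> 'a) \<Rightarrow> bool" where
  "mat_eq n X Y \<longleftrightarrow> (\<forall>i<n. \<forall>j<n. X i j = Y i j)"

definition mat_mult :: "nat \<Rightarrow> (nat \<Rightarrow> nat \<Rightarrow> 'a::semiring_0) \<Rightarrow> (nat \<Rightarrow> nat \<Rightarrow> 'a) \<Rightarrow> nat \<Rightarrow> nat \<Rightarrow> 'a" where
  "mat_mult n X Y = (\<lambda>i j. \<Sum>s<n. X i s * Y s j)"

definition smat_mult_left :: "('f \<Rightarrow> 'a \<Rightarrow> 'a::comm_monoid_add) \<Rightarrow> nat \<Rightarrow> (nat \<Rightarrow> nat \<Rightarrow> 'f) \<Rightarrow> (nat \<Rightarrow> nat \<Rightarrow> 'a) \<Rightarrow> nat \<Rightarrow> nat \<Rightarrow> 'a" where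
  "smat_mult_left sc n A X = (\<lambda>i j. \<Sum>s<n. sc (A i s) (X s j))"

definition smat_mult_right :: "('f \<Rightarrow> 'a \<Rightarrow> 'a::comm_monoid_add) \<Rightarrow> nat \<Rightarrow> (nat \<Rightarrow> nat \<Rightarrow> 'a) \<Rightarrow> (nat \<Rightarrow> nat \<Rightarrow> 'f) \<Rightarrow> nat \<Rightarrow> nat \<Rightarrow> 'a" where
  "smat_mult_right sc n X A = (\<lambda>i j. \<Sum>s<n. sc (A s j) (X i s))"

definition mat_map :: "('a \<Rightarrow> 'b) \<Rightarrow> (nat \<Rightarrow> nat \<Rightarrow> 'a) \<Rightarrow> nat \<Rightarrow> nat \<Rightarrow> 'b" where
  "mat_map f X = (\<lambda>i j. f (X i j))"

definition mat_transpose :: "(nat \<Rightarrow> nat \<Rightarrow> 'a) \<Rightarrow> nat \<Rightarrow> nat \<Rightarrow> 'a" where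
  "mat_transpose X = (\<lambda>i j. X j i)"

definition diag_mat :: "'a::zero \<Rightarrow> nat \<Rightarrow> nat \<Rightarrow> 'a" where
  "diag_mat d = (\<lambda>i j. if i = j then d else 0)"

end

theory Submission
  imports Defs
begin

text \<open>
  Write the coaction on a basis v of a homogeneous component as
  \<rho>(v i) = \<Sum>s X i s \<otimes> v s. Coassociativity and the counit axiom of the coaction
  make X a multiplicative matrix over K (\<Delta>(X i j) = \<Sum>s X i s \<otimes> X s j and
  \<epsilon>(X i j) = \<delta> i j), and the antipode axioms then say exactly that S(X) is a two-sided
  inverse of X; for the one-dimensional top degree this makes D grouplike.
  Since \<rho> is multiplicative, applying it to the relations a i b j = \<delta> i j e and
  b i c j = \<delta> i j e gives Y F^T = D I and F G^T = D I.  Uniqueness of inverses turns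
  these pairings into formulas for S(Y) and S(F), from which parts (c)-(f) follow by
  matrix algebra; S^2(Y) is computed via S(F D\<inverse>) = D S(F).  Finally c = \<alpha> a with
  \<alpha> invertible gives G = \<alpha> Y \<alpha>\<inverse> (part (g)).

  Tensors are given by lists of pure tensors, so all identities between them are
  checked against linear functionals.
\<close>

section \<open>Linear functionals on vector spaces over a field\<close>

lemma field_vector_space: "vector_space ((*) :: 'f::field \<Rightarrow> 'f \<Rightarrow> 'f)"
  by unfold_locales (auto simp: algebra_simps)

lemma vector_space_pair_field:
  "vector_space s \<Longrightarrow> vector_space_pair s ((*) :: 'f::field \<Rightarrow> 'f \<Rightarrow> 'f)"
  using field_vector_space unfolding vector_space_pair_def by blast

lemma linear_functional_iff:
  fixes \<phi> :: "'a::ab_group_add \<Rightarrow> 'f::field"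
  shows "Vector_Spaces.linear s (*) \<phi> \<longleftrightarrow>
    vector_space s \<and> (\<forall>x y. \<phi> (x + y) = \<phi> x + \<phi> y) \<and> (\<forall>c x. \<phi> (s c x) = c * \<phi> x)"
  using field_vector_space[where 'f='f] unfolding Vector_Spaces.linear_iff by auto

lemma linear_functional_sum_scale:
  fixes s :: "'f::field \<Rightarrow> 'a::ab_group_add \<Rightarrow> 'a"
  assumes "Vector_Spaces.linear s (*) \<chi>"
  shows "\<chi> (\<Sum>t\<in>A. s (k t) (w t)) = (\<Sum>t\<in>A. k t * \<chi> (w t))"
proof -
  interpret Vector_Spaces.linear s "(*)" \<chi> by fact
  show ?thesis by (simp add: sum scale)
qed

lemma linear_functional_zero:
  fixes s :: "'f::field \<Rightarrow> 'a::ab_group_add \<Rightarrow> 'a"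
  assumes "Vector_Spaces.linear s (*) \<chi>"
  shows "\<chi> 0 = 0"
proof -
  interpret Vector_Spaces.linear s "(*)" \<chi> by fact
  show ?thesis by (rule zero)
qed

lemma linear_sum_list:
  assumes "Vector_Spaces.linear s1 s2 f"
  shows "f (\<Sum>x\<leftarrow>xs. g x) = (\<Sum>x\<leftarrow>xs. f (g x))"
proof -
  interpret Vector_Spaces.linear s1 s2 f by fact
  show ?thesis by (induction xs) (simp_all add: add)
qed

lemma linear_functional_sum_list:
  fixes s :: "'f::field \<Rightarrow> 'a::ab_group_add \<Rightarrow> 'a"
  assumes "vector_space s" and "\<And>x. x \<in> set xs \<Longrightarrow> Vector_Spaces.linear s (*) (f x)"
  shows "Vector_Spaces.linear s (*) (\<lambda>a. \<Sum>x\<leftarrow>xs. f x a)"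
proof -
  interpret vector_space_pair s "(*) :: 'f \<Rightarrow> 'f \<Rightarrow> 'f" using vector_space_pair_field[OF assms(1)] .
  show ?thesis using assms(2) by (induction xs) (simp_all add: linear_zero linear_compose_add)
qed

lemma linear_functional_compose:
  "Vector_Spaces.linear s1 s2 g \<Longrightarrow> Vector_Spaces.linear s2 (*) \<phi> \<Longrightarrow>
   Vector_Spaces.linear s1 (*) (\<lambda>x. \<phi> (g x))"
  using Vector_Spaces.linear_compose[of s1 s2 g "(*)" \<phi>] by (simp add: comp_def)

lemma linear_functional_times_const:
  fixes \<phi> :: "'a::ab_group_add \<Rightarrow> 'f::field"
  assumes "Vector_Spaces.linear s (*) \<phi>"
  shows "Vector_Spaces.linear s (*) (\<lambda>x. \<phi> x * k)"
  using assms unfolding linear_functional_iff by (simp add: distrib_right)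

lemma eq_if_functionals_agree:
  fixes s :: "'f::field \<Rightarrow> 'a::ab_group_add \<Rightarrow> 'a"
  assumes vs: "vector_space s" and agree: "\<And>\<phi>. Vector_Spaces.linear s (*) \<phi> \<Longrightarrow> \<phi> x = \<phi> y"
  shows "x = y"
proof (rule ccontr)
  assume "x \<noteq> y"
  interpret p: vector_space_pair s "(*) :: 'f \<Rightarrow> 'f \<Rightarrow> 'f" using vector_space_pair_field[OF vs] .
  have "p.vs1.independent {x - y}" using \<open>x \<noteq> y\<close> by simp
  from p.linear_independent_extend[OF this, of "\<lambda>_. 1"] obtain g where
    g: "Vector_Spaces.linear s (*) g" "g (x - y) = 1" by auto
  have "g (x - y) = g x - g y" using g(1) by (rule p.linear_diff)
  with agree[OF g(1)] g(2) show False by simp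
qed

lemma dual_functionals:
  fixes s :: "'f::field \<Rightarrow> 'a::ab_group_add \<Rightarrow> 'a"
  assumes vs: "vector_space s" and ind: "module.independent s B"
  obtains \<chi> where "\<And>u. u \<in> B \<Longrightarrow> Vector_Spaces.linear s (*) (\<chi> u)"
    and "\<And>u w. u \<in> B \<Longrightarrow> w \<in> B \<Longrightarrow> \<chi> u w = (if w = u then 1 else 0)"
proof -
  interpret p: vector_space_pair s "(*) :: 'f \<Rightarrow> 'f \<Rightarrow> 'f" using vector_space_pair_field[OF vs] .
  have "\<forall>u. \<exists>g. Vector_Spaces.linear s (*) g \<and> (\<forall>w\<in>B. g w = (if w = u then 1 else 0))"
  proof
    fix u
    show "\<exists>g. Vector_Spaces.linear s (*) g \<and> (\<forall>w\<in>B. g w = (if w = u then 1 else 0))"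
      using p.linear_independent_extend[OF ind, of "\<lambda>w. if w = u then 1 else 0"] by simp
  qed
  then obtain \<chi> where "\<forall>u. Vector_Spaces.linear s (*) (\<chi> u) \<and> (\<forall>w\<in>B. \<chi> u w = (if w = u then 1 else 0))"
    by metis
  then show ?thesis using that by blast
qed

lemma coordinate_functionals:
  fixes s :: "'f::field \<Rightarrow> 'a::ab_group_add \<Rightarrow> 'a"
  assumes vs: "vector_space s" and ind: "module.independent s (v ` {..<n})" and inj: "inj_on v {..<n}"
  obtains \<chi> where "\<And>t. t < n \<Longrightarrow> Vector_Spaces.linear s (*) (\<chi> t)"
    and "\<And>t u. t < n \<Longrightarrow> u < n \<Longrightarrow> \<chi> t (v u) = (if u = t then 1 else 0)"
proof -
  obtain \<psi> where lin: "\<And>w. w \<in> v ` {..<n} \<Longrightarrow> Vector_Spaces.linear s (*) (\<psi> w)"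
    and dual: "\<And>w w'. w \<in> v ` {..<n} \<Longrightarrow> w' \<in> v ` {..<n} \<Longrightarrow> \<psi> w w' = (if w' = w then 1 else 0)"
    using dual_functionals[OF vs ind] by blast
  show ?thesis
  proof (rule that[of "\<lambda>t. \<psi> (v t)"])
    show "t < n \<Longrightarrow> u < n \<Longrightarrow> \<psi> (v t) (v u) = (if u = t then 1 else 0)" for t u
      using dual[of "v t" "v u"] inj by (auto simp: inj_on_def)
  qed (use lin in auto)
qed

lemma span_dual_expansion:
  fixes s :: "'f::field \<Rightarrow> 'a::ab_group_add \<Rightarrow> 'a"
  assumes vs: "vector_space s" and fin: "finite B"
    and lin: "\<And>u. u \<in> B \<Longrightarrow> Vector_Spaces.linear s (*) (\<chi> u)"
    and dual: "\<And>u w. u \<in> B \<Longrightarrow> w \<in> B \<Longrightarrow> \<chi> u w = (if w = u then 1 else 0)"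
    and x: "x \<in> module.span s B"
  shows "x = (\<Sum>u\<in>B. s (\<chi> u x) u)"
proof -
  interpret vector_space s by (rule vs)
  obtain r where x_eq: "x = (\<Sum>w\<in>B. s (r w) w)" using x span_finite[OF fin] by auto
  have "\<chi> u x = r u" if u: "u \<in> B" for u
  proof -
    have "\<chi> u x = (\<Sum>w\<in>B. r w * (if w = u then 1 else 0))"
      unfolding x_eq linear_functional_sum_scale[OF lin[OF u]] using dual[OF u] by simp
    also have "\<dots> = r u" using fin u by (simp add: if_distrib cong: if_cong)
    finally show ?thesis .
  qed
  then show ?thesis using x_eq by simp
qed

lemma finite_dual_expansion:
  fixes s :: "'f::field \<Rightarrow> 'a::ab_group_add \<Rightarrow> 'a"
  assumes vs: "vector_space s" and fin: "finite A"
  obtains B \<chi> where "finite B" and "\<And>u. u \<in> B \<Longrightarrow> Vector_Spaces.linear s (*) (\<chi> u)"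
    and "\<And>x. x \<in> A \<Longrightarrow> x = (\<Sum>u\<in>B. s (\<chi> u x) u)"
proof -
  interpret vector_space s by (rule vs)
  obtain B where B: "B \<subseteq> A" "independent B" "A \<subseteq> span B"
    using maximal_independent_subset[of A] by blast
  have fB: "finite B" using B(1) fin finite_subset by blast
  obtain \<chi> where lin: "\<And>u. u \<in> B \<Longrightarrow> Vector_Spaces.linear s (*) (\<chi> u)"
    and dual: "\<And>u w. u \<in> B \<Longrightarrow> w \<in> B \<Longrightarrow> \<chi> u w = (if w = u then 1 else 0)"
    using dual_functionals[OF vs B(2)] by blast
  show ?thesis
  proof (rule that[OF fB lin])
    show "x \<in> A \<Longrightarrow> x = (\<Sum>u\<in>B. s (\<chi> u x) u)" for x
      using span_dual_expansion[OF vs fB lin dual] B(3) by blast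
  qed
qed

section \<open>Tensors represented by lists of pure tensors\<close>

lemma tens_eq2_refl: "tens_eq2 s1 s2 L L"
  unfolding tens_eq2_def by metis

lemma tens_eq2_sym: "tens_eq2 s1 s2 L M \<Longrightarrow> tens_eq2 s1 s2 M L"
  unfolding tens_eq2_def by metis

lemma tens_eq2_trans: "tens_eq2 s1 s2 L M \<Longrightarrow> tens_eq2 s1 s2 M N \<Longrightarrow> tens_eq2 s1 s2 L N"
  unfolding tens_eq2_def by metis

lemma sum_upt_pairs:
  "(\<Sum>(x,y)\<leftarrow>map (\<lambda>s. (p s, q s)) [0..<n]. h x y) = (\<Sum>s<n. h (p s) (q s))"
  by (simp add: interv_sum_list_conv_sum_set_nat comp_def atLeast0LessThan)

lemma tens_left_sum:
  "(\<Sum>(x,y,z)\<leftarrow>tens_left f L. h x y z) = (\<Sum>(a,d)\<leftarrow>L. \<Sum>(b,c)\<leftarrow>f a. h b c d)"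
  by (induction L) (auto simp: tens_left_def split_def comp_def)

lemma tens_right_sum:
  "(\<Sum>(x,y,z)\<leftarrow>tens_right g L. h x y z) = (\<Sum>(a,d)\<leftarrow>L. \<Sum>(b,c)\<leftarrow>g d. h a b c)"
  by (induction L) (auto simp: tens_right_def split_def comp_def)

lemma tens_mult_sum:
  "(\<Sum>(x,y)\<leftarrow>tens_mult L M. h x y) = (\<Sum>(a,b)\<leftarrow>L. \<Sum>(c,d)\<leftarrow>M. h (a*c) (b*d))"
  by (induction L) (auto simp: tens_mult_def split_def comp_def)

lemma tens_mult_single: "tens_mult L [(x,y)] = map (\<lambda>(a,b). (a*x, b*y)) L"
  by (induction L) (auto simp: tens_mult_def)

lemma tens_eq2_bilinear:
  fixes s1 :: "'f::field \<Rightarrow> 'a::ab_group_add \<Rightarrow> 'a" and s2 :: "'f \<Rightarrow> 'b::ab_group_add \<Rightarrow> 'b"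
    and \<beta> :: "'a \<Rightarrow> 'b \<Rightarrow> 'f"
  assumes vs1: "vector_space s1" and eq: "tens_eq2 s1 s2 L M"
    and lin1: "\<And>b. Vector_Spaces.linear s1 (*) (\<lambda>a. \<beta> a b)"
    and lin2: "\<And>a. Vector_Spaces.linear s2 (*) (\<beta> a)"
  shows "(\<Sum>(a,b)\<leftarrow>L. \<beta> a b) = (\<Sum>(a,b)\<leftarrow>M. \<beta> a b)"
proof -
  obtain B \<chi> where fin: "finite B" and lin: "\<And>u. u \<in> B \<Longrightarrow> Vector_Spaces.linear s1 (*) (\<chi> u)"
    and expand: "\<And>x. x \<in> fst ` set (L @ M) \<Longrightarrow> x = (\<Sum>u\<in>B. s1 (\<chi> u x) u)"
    using finite_dual_expansion[OF vs1, of "fst ` set (L @ M)"] by blast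
  have expand_sum: "(\<Sum>(a,b)\<leftarrow>N. \<beta> a b) = (\<Sum>u\<in>B. \<Sum>(a,b)\<leftarrow>N. \<chi> u a * \<beta> u b)"
    if N: "set N \<subseteq> set (L @ M)" for N
  proof -
    have "\<beta> a b = (\<Sum>u\<in>B. \<chi> u a * \<beta> u b)" if "(a, b) \<in> set N" for a b
    proof -
      have "\<beta> a b = \<beta> (\<Sum>u\<in>B. s1 (\<chi> u a) u) b"
        using expand[of a] that N by force
      then show ?thesis using linear_functional_sum_scale[OF lin1] by simp
    qed
    then have "(\<Sum>(a,b)\<leftarrow>N. \<beta> a b) = (\<Sum>(a,b)\<leftarrow>N. \<Sum>u\<in>B. \<chi> u a * \<beta> u b)"
      by (intro arg_cong[where f = sum_list] map_cong) auto
    also have "\<dots> = (\<Sum>u\<in>B. \<Sum>(a,b)\<leftarrow>N. \<chi> u a * \<beta> u b)"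
      by (induction N) (auto simp: sum.distrib)
    finally show ?thesis .
  qed
  have "(\<Sum>(a,b)\<leftarrow>L. \<beta> a b) = (\<Sum>u\<in>B. \<Sum>(a,b)\<leftarrow>L. \<chi> u a * \<beta> u b)"
    by (rule expand_sum) auto
  also have "\<dots> = (\<Sum>u\<in>B. \<Sum>(a,b)\<leftarrow>M. \<chi> u a * \<beta> u b)"
    using eq lin lin2 unfolding tens_eq2_def by (intro sum.cong) auto
  also have "\<dots> = (\<Sum>(a,b)\<leftarrow>M. \<beta> a b)"
    by (rule expand_sum[symmetric]) auto
  finally show ?thesis .
qed

lemma tens_eq2_bilinear_map:
  fixes s1 :: "'f::field \<Rightarrow> 'a::ab_group_add \<Rightarrow> 'a" and s2 :: "'f \<Rightarrow> 'b::ab_group_add \<Rightarrow> 'b"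
    and s3 :: "'f \<Rightarrow> 'c::ab_group_add \<Rightarrow> 'c" and \<beta> :: "'a \<Rightarrow> 'b \<Rightarrow> 'c"
  assumes vs1: "vector_space s1" and vs3: "vector_space s3" and eq: "tens_eq2 s1 s2 L M"
    and lin1: "\<And>b. Vector_Spaces.linear s1 s3 (\<lambda>a. \<beta> a b)"
    and lin2: "\<And>a. Vector_Spaces.linear s2 s3 (\<beta> a)"
  shows "(\<Sum>(a,b)\<leftarrow>L. \<beta> a b) = (\<Sum>(a,b)\<leftarrow>M. \<beta> a b)"
proof (rule eq_if_functionals_agree[OF vs3])
  fix \<omega> :: "'c \<Rightarrow> 'f" assume \<omega>: "Vector_Spaces.linear s3 (*) \<omega>"
  have "\<omega> (\<Sum>(a,b)\<leftarrow>L. \<beta> a b) = (\<Sum>(a,b)\<leftarrow>L. \<omega> (\<beta> a b))"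
    using linear_sum_list[OF \<omega>] by (simp add: split_def)
  also have "\<dots> = (\<Sum>(a,b)\<leftarrow>M. \<omega> (\<beta> a b))"
  proof (rule tens_eq2_bilinear[OF vs1 eq])
    show "Vector_Spaces.linear s1 (*) (\<lambda>a. \<omega> (\<beta> a b))" for b
      by (rule linear_functional_compose[OF lin1 \<omega>])
    show "Vector_Spaces.linear s2 (*) (\<lambda>b. \<omega> (\<beta> a b))" for a
      by (rule linear_functional_compose[OF lin2 \<omega>])
  qed
  also have "\<dots> = \<omega> (\<Sum>(a,b)\<leftarrow>M. \<beta> a b)"
    using linear_sum_list[OF \<omega>, symmetric] by (simp add: split_def)
  finally show "\<omega> (\<Sum>(a,b)\<leftarrow>L. \<beta> a b) = \<omega> (\<Sum>(a,b)\<leftarrow>M. \<beta> a b)" .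
qed

lemma algebra_over_vector_space: "algebra_over s \<Longrightarrow> vector_space s"
  unfolding algebra_over_def by blast

lemma algebra_mult_left_linear: "algebra_over s \<Longrightarrow> Vector_Spaces.linear s s (\<lambda>x. x * y)"
  unfolding algebra_over_def Vector_Spaces.linear_iff by (auto simp: distrib_right)

lemma algebra_mult_right_linear: "algebra_over s \<Longrightarrow> Vector_Spaces.linear s s (\<lambda>y. x * y)"
  unfolding algebra_over_def Vector_Spaces.linear_iff by (simp add: distrib_left) metis

lemma tens_mult_cong:
  fixes s1 :: "'f::field \<Rightarrow> 'a::ring_1 \<Rightarrow> 'a" and s2 :: "'f \<Rightarrow> 'b::ring_1 \<Rightarrow> 'b"
  assumes alg1: "algebra_over s1" and alg2: "algebra_over s2"
    and eqL: "tens_eq2 s1 s2 L L'" and eqM: "tens_eq2 s1 s2 M M'"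
  shows "tens_eq2 s1 s2 (tens_mult L M) (tens_mult L' M')"
  unfolding tens_eq2_def
proof (intro allI impI, elim conjE)
  fix \<phi> \<psi> assume \<phi>: "Vector_Spaces.linear s1 (*) \<phi>" and \<psi>: "Vector_Spaces.linear s2 (*) \<psi>"
  have vs1: "vector_space s1" and vs2: "vector_space s2"
    using alg1 alg2 by (auto simp: algebra_over_vector_space)
  have \<phi>_mult: "Vector_Spaces.linear s1 (*) (\<lambda>a. \<phi> (a * c))"
    "Vector_Spaces.linear s1 (*) (\<lambda>c. \<phi> (a * c))" for a c
    by (rule linear_functional_compose[OF _ \<phi>], simp add: alg1 algebra_mult_left_linear algebra_mult_right_linear)+
  have \<psi>_mult: "Vector_Spaces.linear s2 (*) (\<lambda>b. \<psi> (b * d))"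
    "Vector_Spaces.linear s2 (*) (\<lambda>d. \<psi> (b * d))" for b d
    by (rule linear_functional_compose[OF _ \<psi>], simp add: alg2 algebra_mult_left_linear algebra_mult_right_linear)+
  have inner: "(\<Sum>(c,d)\<leftarrow>M. \<phi> (a*c) * \<psi> (b*d)) = (\<Sum>(c,d)\<leftarrow>M'. \<phi> (a*c) * \<psi> (b*d))" for a b
    using eqM \<phi>_mult(2) \<psi>_mult(2) unfolding tens_eq2_def by blast
  have "(\<Sum>(x,y)\<leftarrow>tens_mult L M. \<phi> x * \<psi> y) = (\<Sum>(a,b)\<leftarrow>L. \<Sum>(c,d)\<leftarrow>M'. \<phi> (a*c) * \<psi> (b*d))"
    by (simp add: tens_mult_sum inner)
  also have "\<dots> = (\<Sum>(a,b)\<leftarrow>L'. \<Sum>(c,d)\<leftarrow>M'. \<phi> (a*c) * \<psi> (b*d))"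
  proof (rule tens_eq2_bilinear[OF vs1 eqL])
    show "Vector_Spaces.linear s1 (*) (\<lambda>a. \<Sum>(c,d)\<leftarrow>M'. \<phi> (a*c) * \<psi> (b*d))" for b
      using linear_functional_sum_list[OF vs1, of M' "\<lambda>(c,d) a. \<phi> (a*c) * \<psi> (b*d)"]
        linear_functional_times_const[OF \<phi>_mult(1)] by (simp add: split_def)
    show "Vector_Spaces.linear s2 (*) (\<lambda>b. \<Sum>(c,d)\<leftarrow>M'. \<phi> (a*c) * \<psi> (b*d))" for a
      using linear_functional_sum_list[OF vs2, of M' "\<lambda>(c,d) b. \<phi> (a*c) * \<psi> (b*d)"]
        linear_functional_times_const[OF \<psi>_mult(1)] by (simp add: split_def mult.commute)
  qed
  also have "\<dots> = (\<Sum>(x,y)\<leftarrow>tens_mult L' M'. \<phi> x * \<psi> y)"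
    by (simp add: tens_mult_sum)
  finally show "(\<Sum>(x,y)\<leftarrow>tens_mult L M. \<phi> x * \<psi> y) = (\<Sum>(x,y)\<leftarrow>tens_mult L' M'. \<phi> x * \<psi> y)" .
qed

section \<open>Square matrices over a ring\<close>

lemma mat_eq_refl [simp]: "mat_eq n X X"
  by (simp add: mat_eq_def)

lemma mat_eq_sym: "mat_eq n X Y \<Longrightarrow> mat_eq n Y X"
  by (simp add: mat_eq_def)

lemma mat_eq_trans [trans]: "mat_eq n X Y \<Longrightarrow> mat_eq n Y Z \<Longrightarrow> mat_eq n X Z"
  by (simp add: mat_eq_def)

lemma mat_mult_cong:
  "mat_eq n A A' \<Longrightarrow> mat_eq n B B' \<Longrightarrow> mat_eq n (mat_mult n A B) (mat_mult n A' B')"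
  by (simp add: mat_eq_def mat_mult_def)

lemma mat_mult_assoc:
  fixes A B C :: "nat \<Rightarrow> nat \<Rightarrow> 'a::semiring_0"
  shows "mat_eq n (mat_mult n (mat_mult n A B) C) (mat_mult n A (mat_mult n B C))"
  unfolding mat_eq_def mat_mult_def
proof (intro allI impI)
  fix i j
  show "(\<Sum>t<n. (\<Sum>s<n. A i s * B s t) * C t j) = (\<Sum>s<n. A i s * (\<Sum>t<n. B s t * C t j))"
    by (simp add: sum_distrib_left sum_distrib_right mult.assoc) (rule sum.swap)
qed

lemma mat_mult_diag_right [simp]:
  fixes X :: "nat \<Rightarrow> nat \<Rightarrow> 'a::semiring_0"
  shows "j < n \<Longrightarrow> mat_mult n X (diag_mat d) i j = X i j * d"
  by (simp add: mat_mult_def diag_mat_def if_distrib[of "(*) _"] cong: if_cong)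

lemma mat_mult_diag_left [simp]:
  fixes X :: "nat \<Rightarrow> nat \<Rightarrow> 'a::semiring_0"
  shows "i < n \<Longrightarrow> mat_mult n (diag_mat d) X i j = d * X i j"
  by (simp add: mat_mult_def diag_mat_def if_distrib[of "\<lambda>x. x * _"] cong: if_cong)

lemma mat_inverse_unique:
  fixes L M R :: "nat \<Rightarrow> nat \<Rightarrow> 'a::semiring_1"
  assumes LM: "mat_eq n (mat_mult n L M) (diag_mat 1)" and MR: "mat_eq n (mat_mult n M R) (diag_mat 1)"
  shows "mat_eq n L R"
proof -
  have "mat_eq n L (mat_mult n L (diag_mat 1))" by (simp add: mat_eq_def)
  also have "mat_eq n \<dots> (mat_mult n L (mat_mult n M R))"
    by (rule mat_mult_cong[OF mat_eq_refl mat_eq_sym[OF MR]])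
  also have "mat_eq n \<dots> (mat_mult n (mat_mult n L M) R)"
    by (rule mat_eq_sym[OF mat_mult_assoc])
  also have "mat_eq n \<dots> (mat_mult n (diag_mat 1) R)"
    by (rule mat_mult_cong[OF LM mat_eq_refl])
  also have "mat_eq n \<dots> R" by (simp add: mat_eq_def)
  finally show ?thesis .
qed

text \<open>If L X = I and X Z^T = g I with g h = 1, then L = Z^T (h I); this is how a pairing
  between two comodules determines the antipode of a coefficient matrix.\<close>

lemma left_inverse_from_pairing:
  fixes L X Z :: "nat \<Rightarrow> nat \<Rightarrow> 'a::ring_1"
  assumes LX: "mat_eq n (mat_mult n L X) (diag_mat 1)"
    and XZ: "mat_eq n (mat_mult n X (mat_transpose Z)) (diag_mat g)" and gh: "g * h = 1"
  shows "mat_eq n L (\<lambda>i j. Z j i * h)"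
proof (rule mat_inverse_unique[OF LX])
  have "mat_mult n X (\<lambda>i j. Z j i * h) i j = mat_mult n X (mat_transpose Z) i j * h" for i j
    by (simp add: mat_mult_def mat_transpose_def sum_distrib_right mult.assoc)
  then show "mat_eq n (mat_mult n X (\<lambda>i j. Z j i * h)) (diag_mat 1)"
    using XZ gh by (simp add: mat_eq_def diag_mat_def)
qed

lemma mat_mult_scaled_inverse:
  fixes L W Z :: "nat \<Rightarrow> nat \<Rightarrow> 'a::ring_1"
  assumes LZ: "mat_eq n (mat_mult n L Z) (diag_mat 1)" and W: "mat_eq n W (\<lambda>i j. Z i j * h)"
  shows "mat_eq n (mat_mult n L W) (diag_mat h)"
proof -
  have "mat_mult n L W i j = mat_mult n L Z i j * h" if "j < n" for i j
    using W that by (simp add: mat_eq_def mat_mult_def sum_distrib_right mult.assoc)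
  then show ?thesis using LZ by (simp add: mat_eq_def diag_mat_def)
qed

lemma expansion_compose:
  fixes s :: "'f::field \<Rightarrow> 'a::ab_group_add \<Rightarrow> 'a"
  assumes vs: "vector_space s"
    and u: "\<And>i. i < n \<Longrightarrow> u i = (\<Sum>j<n. s (A i j) (v j))"
    and v: "\<And>j. j < n \<Longrightarrow> v j = (\<Sum>t<n. s (B j t) (w t))" and i: "i < n"
  shows "u i = (\<Sum>t<n. s (mat_mult n A B i t) (w t))"
proof -
  interpret vector_space s by (rule vs)
  have "u i = (\<Sum>j<n. \<Sum>t<n. s (A i j * B j t) (w t))"
    using u[OF i] v by (simp add: scale_sum_right)
  also have "\<dots> = (\<Sum>t<n. s (mat_mult n A B i t) (w t))"
    by (subst sum.swap) (simp add: mat_mult_def scale_sum_left)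
  finally show ?thesis .
qed

lemma independent_self_expansion:
  fixes s :: "'f::field \<Rightarrow> 'a::ab_group_add \<Rightarrow> 'a"
  assumes vs: "vector_space s" and ind: "module.independent s (v ` {..<n})" and inj: "inj_on v {..<n}"
    and M: "\<And>i. i < n \<Longrightarrow> v i = (\<Sum>t<n. s (M i t) (v t))"
  shows "mat_eq n M (diag_mat 1)"
proof -
  obtain \<chi> where lin: "\<And>k. k < n \<Longrightarrow> Vector_Spaces.linear s (*) (\<chi> k)"
    and dual: "\<And>k t. k < n \<Longrightarrow> t < n \<Longrightarrow> \<chi> k (v t) = (if t = k then 1 else 0)"
    using coordinate_functionals[OF vs ind inj] by blast
  have "M i k = (if i = k then 1 else 0)" if ik: "i < n" "k < n" for i k
  proof -
    have "\<chi> k (v i) = (\<Sum>t<n. M i t * \<chi> k (v t))"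
      by (subst M[OF ik(1)]) (rule linear_functional_sum_scale[OF lin[OF ik(2)]])
    also have "\<dots> = M i k"
      using ik dual by (simp add: if_distrib[of "(*) _"] cong: if_cong)
    finally show ?thesis using dual ik by simp
  qed
  then show ?thesis by (simp add: mat_eq_def diag_mat_def)
qed

lemma transition_matrix_invertible:
  fixes s :: "'f::field \<Rightarrow> 'a::ab_group_add \<Rightarrow> 'a"
  assumes vs: "vector_space s"
    and ind_a: "module.independent s (a ` {..<n})" and inj_a: "inj_on a {..<n}"
    and ind_c: "module.independent s (c ` {..<n})" and inj_c: "inj_on c {..<n}"
    and a_span: "\<And>i. i < n \<Longrightarrow> a i \<in> module.span s (c ` {..<n})"
    and c_\<alpha>: "\<And>i. i < n \<Longrightarrow> c i = (\<Sum>j<n. s (\<alpha> i j) (a j))"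
  obtains \<beta> where "mat_eq n (mat_mult n \<alpha> \<beta>) (diag_mat 1)" "mat_eq n (mat_mult n \<beta> \<alpha>) (diag_mat 1)"
proof -
  interpret vector_space s by (rule vs)
  have "\<forall>i. \<exists>r. i < n \<longrightarrow> a i = (\<Sum>j<n. s (r j) (c j))"
  proof
    fix i
    show "\<exists>r. i < n \<longrightarrow> a i = (\<Sum>j<n. s (r j) (c j))"
    proof (cases "i < n")
      case True
      then obtain r where "a i = (\<Sum>w\<in>c ` {..<n}. s (r w) w)"
        using a_span span_finite[of "c ` {..<n}"] by auto
      then show ?thesis using inj_c by (auto simp: sum.reindex)
    qed simp
  qed
  then obtain \<beta> where a_\<beta>: "\<And>i. i < n \<Longrightarrow> a i = (\<Sum>j<n. s (\<beta> i j) (c j))" by metis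
  show ?thesis
  proof (rule that)
    show "mat_eq n (mat_mult n \<alpha> \<beta>) (diag_mat 1)"
      using expansion_compose[OF vs c_\<alpha> a_\<beta>] by (intro independent_self_expansion[OF vs ind_c inj_c])
    show "mat_eq n (mat_mult n \<beta> \<alpha>) (diag_mat 1)"
      using expansion_compose[OF vs a_\<beta> c_\<alpha>] by (intro independent_self_expansion[OF vs ind_a inj_a])
  qed
qed

lemma inverse_transition_expansion:
  fixes s :: "'f::field \<Rightarrow> 'a::ab_group_add \<Rightarrow> 'a"
  assumes vs: "vector_space s"
    and c_\<alpha>: "\<And>i. i < n \<Longrightarrow> c i = (\<Sum>j<n. s (\<alpha> i j) (a j))"
    and \<beta>\<alpha>: "mat_eq n (mat_mult n \<beta> \<alpha>) (diag_mat 1)" and i: "i < n"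
  shows "a i = (\<Sum>j<n. s (\<beta> i j) (c j))"
proof -
  interpret vector_space s by (rule vs)
  have "(\<Sum>j<n. s (\<beta> i j) (c j)) = (\<Sum>t<n. s (mat_mult n \<beta> \<alpha> i t) (a t))"
    by (rule expansion_compose[OF vs _ c_\<alpha> i]) simp
  also have "\<dots> = (\<Sum>t<n. s (if i = t then 1 else 0) (a t))"
    using \<beta>\<alpha> i by (intro sum.cong refl) (simp add: mat_eq_def diag_mat_def)
  also have "\<dots> = a i" using i by (simp add: if_distrib[of "\<lambda>r. s r _"] cong: if_cong)
  finally show ?thesis by simp
qed

section \<open>Comodule algebras over a Hopf algebra\<close>

locale hopf_comodule =
  fixes sF :: "'f::field \<Rightarrow> 'k::ring_1 \<Rightarrow> 'k"
    and \<Delta> :: "'k \<Rightarrow> ('k \<times> 'k) list" and \<epsilon> :: "'k \<Rightarrow> 'f" and S :: "'k \<Rightarrow> 'k"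
    and sE :: "'f \<Rightarrow> 'e::ring_1 \<Rightarrow> 'e" and Egr :: "nat \<Rightarrow> 'e set"
    and \<rho> :: "'e \<Rightarrow> ('k \<times> 'e) list"
  assumes hopf: "hopf_algebra sF \<Delta> \<epsilon> S"
    and comod: "graded_comodule_algebra sF \<Delta> \<epsilon> sE Egr \<rho>"
    and alg_E: "algebra_over sE"
begin

lemma alg_K: "algebra_over sF"
  using hopf unfolding hopf_algebra_def by blast

lemma vs_K: "vector_space sF"
  using alg_K by (rule algebra_over_vector_space)

lemma vs_E: "vector_space sE"
  using alg_E by (rule algebra_over_vector_space)

lemma comult_add: "tens_eq2 sF sF (\<Delta> (x + y)) (\<Delta> x @ \<Delta> y)"
  and comult_scale: "tens_eq2 sF sF (\<Delta> (sF c x)) (map (\<lambda>(a,b). (sF c a, b)) (\<Delta> x))"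
  and counit_linear: "Vector_Spaces.linear sF (*) \<epsilon>"
  and comult_mult: "tens_eq2 sF sF (\<Delta> (x * y)) (tens_mult (\<Delta> x) (\<Delta> y))"
  and comult_one: "tens_eq2 sF sF (\<Delta> 1) [(1, 1)]"
  and counit_mult: "\<epsilon> (x * y) = \<epsilon> x * \<epsilon> y"
  and counit_one: "\<epsilon> 1 = 1"
  and antipode_linear: "Vector_Spaces.linear sF sF S"
  and antipode_left: "(\<Sum>(a,b)\<leftarrow>\<Delta> x. S a * b) = sF (\<epsilon> x) 1"
  and antipode_right: "(\<Sum>(a,b)\<leftarrow>\<Delta> x. a * S b) = sF (\<epsilon> x) 1"
  using hopf unfolding hopf_algebra_def by blast+

lemma coact_add: "tens_eq2 sF sE (\<rho> (x + y)) (\<rho> x @ \<rho> y)"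
  and coact_scale: "tens_eq2 sF sE (\<rho> (sE c x)) (map (\<lambda>(a,b). (a, sE c b)) (\<rho> x))"
  and coact_coassoc: "tens_eq3 sF sF sE (tens_left \<Delta> (\<rho> x)) (tens_right \<rho> (\<rho> x))"
  and coact_counit: "(\<Sum>(a,b)\<leftarrow>\<rho> x. sE (\<epsilon> a) b) = x"
  and coact_mult: "tens_eq2 sF sE (\<rho> (x * y)) (tens_mult (\<rho> x) (\<rho> y))"
  using comod unfolding graded_comodule_algebra_def by blast+

lemma comult_functional_linear:
  assumes \<phi>: "Vector_Spaces.linear sF (*) \<phi>" and \<psi>: "Vector_Spaces.linear sF (*) \<psi>"
  shows "Vector_Spaces.linear sF (*) (\<lambda>x. \<Sum>(a,b)\<leftarrow>\<Delta> x. \<phi> a * \<psi> b)"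
  unfolding linear_functional_iff
proof (intro conjI allI vs_K)
  show "(\<Sum>(a,b)\<leftarrow>\<Delta> (x + y). \<phi> a * \<psi> b) = (\<Sum>(a,b)\<leftarrow>\<Delta> x. \<phi> a * \<psi> b) + (\<Sum>(a,b)\<leftarrow>\<Delta> y. \<phi> a * \<psi> b)" for x y
    using comult_add[of x y] \<phi> \<psi> unfolding tens_eq2_def by simp
  show "(\<Sum>(a,b)\<leftarrow>\<Delta> (sF c x). \<phi> a * \<psi> b) = c * (\<Sum>(a,b)\<leftarrow>\<Delta> x. \<phi> a * \<psi> b)" for c x
    using comult_scale[of c x] \<phi> \<psi> \<phi>[unfolded linear_functional_iff] unfolding tens_eq2_def
    by (simp add: sum_list_const_mult split_def comp_def mult.assoc)
qed

lemma coaction_functional_linear: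
  assumes \<phi>: "Vector_Spaces.linear sF (*) \<phi>" and \<chi>: "Vector_Spaces.linear sE (*) \<chi>"
  shows "Vector_Spaces.linear sE (*) (\<lambda>x. \<Sum>(a,b)\<leftarrow>\<rho> x. \<phi> a * \<chi> b)"
  unfolding linear_functional_iff
proof (intro conjI allI vs_E)
  show "(\<Sum>(a,b)\<leftarrow>\<rho> (x + y). \<phi> a * \<chi> b) = (\<Sum>(a,b)\<leftarrow>\<rho> x. \<phi> a * \<chi> b) + (\<Sum>(a,b)\<leftarrow>\<rho> y. \<phi> a * \<chi> b)" for x y
    using coact_add[of x y] \<phi> \<chi> unfolding tens_eq2_def by simp
  show "(\<Sum>(a,b)\<leftarrow>\<rho> (sE c x). \<phi> a * \<chi> b) = c * (\<Sum>(a,b)\<leftarrow>\<rho> x. \<phi> a * \<chi> b)" for c x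
    using coact_scale[of c x] \<phi> \<chi> \<chi>[unfolded linear_functional_iff] unfolding tens_eq2_def
    by (simp add: sum_list_const_mult split_def comp_def mult.left_commute)
qed

lemma coaction_expand:
  assumes \<rho>x: "tens_eq2 sF sE (\<rho> x) (map (\<lambda>s. (X s, v s)) [0..<n])"
    and \<phi>: "Vector_Spaces.linear sF (*) \<phi>" and \<chi>: "Vector_Spaces.linear sE (*) \<chi>"
  shows "(\<Sum>(a,b)\<leftarrow>\<rho> x. \<phi> a * \<chi> b) = (\<Sum>s<n. \<phi> (X s) * \<chi> (v s))"
  using \<rho>x \<phi> \<chi> unfolding tens_eq2_def sum_upt_pairs by blast

lemma coaction_coefficient:
  assumes \<rho>x: "tens_eq2 sF sE (\<rho> x) (map (\<lambda>s. (X s, v s)) [0..<n])"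
    and \<phi>: "Vector_Spaces.linear sF (*) \<phi>" and \<chi>: "Vector_Spaces.linear sE (*) \<chi>"
    and dual: "\<And>t. t < n \<Longrightarrow> \<chi> (v t) = (if t = k then 1 else 0)" and k: "k < n"
  shows "(\<Sum>(a,b)\<leftarrow>\<rho> x. \<phi> a * \<chi> b) = \<phi> (X k)"
  using k dual by (simp add: coaction_expand[OF \<rho>x \<phi> \<chi>] if_distrib[of "(*) _"] cong: if_cong)

definition multiplicative_matrix :: "nat \<Rightarrow> (nat \<Rightarrow> nat \<Rightarrow> 'k) \<Rightarrow> bool" where
  "multiplicative_matrix n X \<longleftrightarrow> (\<forall>i<n. \<forall>j<n.
     tens_eq2 sF sF (\<Delta> (X i j)) (map (\<lambda>s. (X i s, X s j)) [0..<n]) \<and> \<epsilon> (X i j) = (if i = j then 1 else 0))"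

definition grouplike :: "'k \<Rightarrow> bool" where
  "grouplike g \<longleftrightarrow> tens_eq2 sF sF (\<Delta> g) [(g, g)] \<and> \<epsilon> g = 1"

lemma grouplike_iff_multiplicative: "grouplike g \<longleftrightarrow> multiplicative_matrix 1 (\<lambda>_ _. g)"
  by (simp add: grouplike_def multiplicative_matrix_def)

text \<open>The coefficient matrix of the coaction on an independent family is multiplicative:
  comultiplicativity comes from coassociativity, the counit condition from the counit axiom.\<close>

lemma coaction_matrix_comult:
  assumes ind: "module.independent sE (v ` {..<n})" and inj: "inj_on v {..<n}"
    and \<rho>v: "\<And>i. i < n \<Longrightarrow> tens_eq2 sF sE (\<rho> (v i)) (map (\<lambda>s. (X i s, v s)) [0..<n])"
    and i: "i < n" and j: "j < n"
  shows "tens_eq2 sF sF (\<Delta> (X i j)) (map (\<lambda>s. (X i s, X s j)) [0..<n])"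
  unfolding tens_eq2_def
proof (intro allI impI, elim conjE)
  fix \<phi> \<psi> assume \<phi>: "Vector_Spaces.linear sF (*) \<phi>" and \<psi>: "Vector_Spaces.linear sF (*) \<psi>"
  obtain \<chi> where \<chi>: "Vector_Spaces.linear sE (*) (\<chi> j)"
    and dual: "\<And>t. t < n \<Longrightarrow> \<chi> j (v t) = (if t = j then 1 else 0)"
    using coordinate_functionals[OF vs_E ind inj] j by metis
  define \<Theta> where "\<Theta> k = (\<Sum>(a,b)\<leftarrow>\<Delta> k. \<phi> a * \<psi> b)" for k
  define \<Psi> where "\<Psi> w = (\<Sum>(a,b)\<leftarrow>\<rho> w. \<psi> a * \<chi> j b)" for w
  have \<Theta>: "Vector_Spaces.linear sF (*) \<Theta>"
    unfolding \<Theta>_def by (rule comult_functional_linear[OF \<phi> \<psi>])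
  have \<Psi>: "Vector_Spaces.linear sE (*) \<Psi>"
    unfolding \<Psi>_def by (rule coaction_functional_linear[OF \<psi> \<chi>])
  have "\<Theta> (X i j) = (\<Sum>(a,d)\<leftarrow>\<rho> (v i). \<Theta> a * \<chi> j d)"
    by (rule coaction_coefficient[OF \<rho>v[OF i] \<Theta> \<chi> dual j, symmetric])
  also have "\<dots> = (\<Sum>(x,y,z)\<leftarrow>tens_left \<Delta> (\<rho> (v i)). \<phi> x * \<psi> y * \<chi> j z)"
    unfolding tens_left_sum \<Theta>_def by (simp add: split_def sum_list_mult_const)
  also have "\<dots> = (\<Sum>(x,y,z)\<leftarrow>tens_right \<rho> (\<rho> (v i)). \<phi> x * \<psi> y * \<chi> j z)"
    using coact_coassoc[of "v i"] \<phi> \<psi> \<chi> unfolding tens_eq3_def by blast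
  also have "\<dots> = (\<Sum>(a,d)\<leftarrow>\<rho> (v i). \<phi> a * \<Psi> d)"
    unfolding tens_right_sum \<Psi>_def by (simp add: split_def sum_list_const_mult mult.assoc)
  also have "\<dots> = (\<Sum>s<n. \<phi> (X i s) * \<Psi> (v s))"
    by (rule coaction_expand[OF \<rho>v[OF i] \<phi> \<Psi>])
  also have "\<dots> = (\<Sum>s<n. \<phi> (X i s) * \<psi> (X s j))"
    unfolding \<Psi>_def using coaction_coefficient[OF \<rho>v \<psi> \<chi> dual j] by simp
  finally show "(\<Sum>(a,b)\<leftarrow>\<Delta> (X i j). \<phi> a * \<psi> b) = (\<Sum>(a,b)\<leftarrow>map (\<lambda>s. (X i s, X s j)) [0..<n]. \<phi> a * \<psi> b)"
    unfolding \<Theta>_def sum_upt_pairs .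
qed

lemma coaction_matrix_counit:
  assumes ind: "module.independent sE (v ` {..<n})" and inj: "inj_on v {..<n}"
    and \<rho>v: "\<And>i. i < n \<Longrightarrow> tens_eq2 sF sE (\<rho> (v i)) (map (\<lambda>s. (X i s, v s)) [0..<n])"
    and i: "i < n" and j: "j < n"
  shows "\<epsilon> (X i j) = (if i = j then 1 else 0)"
proof -
  obtain \<chi> where \<chi>: "Vector_Spaces.linear sE (*) (\<chi> j)"
    and dual: "\<And>t. t < n \<Longrightarrow> \<chi> j (v t) = (if t = j then 1 else 0)"
    using coordinate_functionals[OF vs_E ind inj] j by metis
  have "\<epsilon> (X i j) = (\<Sum>(a,b)\<leftarrow>\<rho> (v i). \<epsilon> a * \<chi> j b)"
    by (rule coaction_coefficient[OF \<rho>v[OF i] counit_linear \<chi> dual j, symmetric])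
  also have "\<dots> = \<chi> j (\<Sum>(a,b)\<leftarrow>\<rho> (v i). sE (\<epsilon> a) b)"
    using \<chi>[unfolded linear_functional_iff] by (simp add: linear_sum_list[OF \<chi>] split_def)
  also have "\<dots> = (if i = j then 1 else 0)"
    using dual i by (simp add: coact_counit)
  finally show ?thesis .
qed

lemma coaction_matrix_multiplicative:
  assumes "module.independent sE (v ` {..<n})" and "inj_on v {..<n}"
    and "\<And>i. i < n \<Longrightarrow> tens_eq2 sF sE (\<rho> (v i)) (map (\<lambda>s. (X i s, v s)) [0..<n])"
  shows "multiplicative_matrix n X"
  using coaction_matrix_comult[OF assms] coaction_matrix_counit[OF assms]
  unfolding multiplicative_matrix_def by blast

lemma antipode_left_expand:
  assumes \<Delta>x: "tens_eq2 sF sF (\<Delta> x) (map (\<lambda>s. (P s, Q s)) [0..<n])"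
  shows "(\<Sum>s<n. S (P s) * Q s) = sF (\<epsilon> x) 1"
proof -
  have "(\<Sum>(a,b)\<leftarrow>\<Delta> x. S a * b) = (\<Sum>(a,b)\<leftarrow>map (\<lambda>s. (P s, Q s)) [0..<n]. S a * b)"
  proof (rule tens_eq2_bilinear_map[OF vs_K vs_K \<Delta>x])
    show "Vector_Spaces.linear sF sF (\<lambda>a. S a * b)" for b
      using Vector_Spaces.linear_compose[OF antipode_linear algebra_mult_left_linear[OF alg_K, of b]]
      by (simp add: comp_def)
    show "Vector_Spaces.linear sF sF ((*) (S a))" for a
      using algebra_mult_right_linear[OF alg_K] by simp
  qed
  then show ?thesis unfolding sum_upt_pairs antipode_left by simp
qed

lemma antipode_right_expand:
  assumes \<Delta>x: "tens_eq2 sF sF (\<Delta> x) (map (\<lambda>s. (P s, Q s)) [0..<n])"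
  shows "(\<Sum>s<n. P s * S (Q s)) = sF (\<epsilon> x) 1"
proof -
  have "(\<Sum>(a,b)\<leftarrow>\<Delta> x. a * S b) = (\<Sum>(a,b)\<leftarrow>map (\<lambda>s. (P s, Q s)) [0..<n]. a * S b)"
  proof (rule tens_eq2_bilinear_map[OF vs_K vs_K \<Delta>x])
    show "Vector_Spaces.linear sF sF (\<lambda>a. a * S b)" for b
      using algebra_mult_left_linear[OF alg_K] by simp
    show "Vector_Spaces.linear sF sF (\<lambda>b. a * S b)" for a
      using Vector_Spaces.linear_compose[OF antipode_linear algebra_mult_right_linear[OF alg_K, of a]]
      by (simp add: comp_def)
  qed
  then show ?thesis unfolding sum_upt_pairs antipode_right by simp
qed

lemma multiplicative_matrix_antipode:
  assumes X: "multiplicative_matrix n X"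
  shows "mat_eq n (mat_mult n X (mat_map S X)) (diag_mat 1)"
    and "mat_eq n (mat_mult n (mat_map S X) X) (diag_mat 1)"
proof -
  interpret vector_space sF by (rule vs_K)
  have \<epsilon>X: "sF (\<epsilon> (X i j)) 1 = diag_mat 1 i j" if "i < n" "j < n" for i j
    using X that by (simp add: multiplicative_matrix_def diag_mat_def)
  show "mat_eq n (mat_mult n X (mat_map S X)) (diag_mat 1)"
    using X antipode_right_expand \<epsilon>X
    unfolding mat_eq_def mat_mult_def mat_map_def multiplicative_matrix_def by metis
  show "mat_eq n (mat_mult n (mat_map S X) X) (diag_mat 1)"
    using X antipode_left_expand \<epsilon>X
    unfolding mat_eq_def mat_mult_def mat_map_def multiplicative_matrix_def by metis
qed

lemma grouplike_invertible:
  assumes "grouplike g"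
  shows "g * S g = 1" and "S g * g = 1"
  using multiplicative_matrix_antipode[of 1 "\<lambda>_ _. g"] assms
  unfolding grouplike_iff_multiplicative by (simp_all add: mat_eq_def mat_mult_def mat_map_def diag_mat_def)

lemma grouplike_antipode:
  assumes g: "grouplike g"
  shows "grouplike (S g)"
proof -
  have \<Delta>g: "tens_eq2 sF sF (\<Delta> g) [(g, g)]" and \<epsilon>g: "\<epsilon> g = 1"
    using g unfolding grouplike_def by auto
  note inv = grouplike_invertible[OF g]
  have "tens_eq2 sF sF (\<Delta> (S g * g)) (tens_mult (\<Delta> (S g)) [(g, g)])"
    by (rule tens_eq2_trans[OF comult_mult tens_mult_cong[OF alg_K alg_K tens_eq2_refl \<Delta>g]])
  then have "tens_eq2 sF sF (tens_mult (\<Delta> (S g)) [(g, g)]) [(1, 1)]"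
    using tens_eq2_trans[OF tens_eq2_sym comult_one] inv(2) by simp
  then have "tens_eq2 sF sF (tens_mult (tens_mult (\<Delta> (S g)) [(g, g)]) [(S g, S g)])
      (tens_mult [(1, 1)] [(S g, S g)])"
    by (rule tens_mult_cong[OF alg_K alg_K _ tens_eq2_refl])
  moreover have "tens_mult (tens_mult (\<Delta> (S g)) [(g, g)]) [(S g, S g)] = \<Delta> (S g)"
    unfolding tens_mult_single map_map by (rule map_idI) (auto simp: mult.assoc inv(1))
  ultimately have "tens_eq2 sF sF (\<Delta> (S g)) [(S g, S g)]"
    by (simp add: tens_mult_single)
  moreover have "\<epsilon> (S g) = 1"
    using counit_mult[of "S g" g] \<epsilon>g inv(2) counit_one by simp
  ultimately show ?thesis unfolding grouplike_def ..
qed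

lemma multiplicative_matrix_twist:
  assumes X: "multiplicative_matrix n X" and g: "grouplike g"
  shows "multiplicative_matrix n (\<lambda>i j. X i j * g)"
  unfolding multiplicative_matrix_def
proof (intro allI impI conjI)
  fix i j assume ij: "i < n" "j < n"
  have "tens_eq2 sF sF (\<Delta> (X i j * g)) (tens_mult (map (\<lambda>s. (X i s, X s j)) [0..<n]) [(g, g)])"
    using X g ij unfolding multiplicative_matrix_def grouplike_def
    by (blast intro: tens_eq2_trans[OF comult_mult tens_mult_cong[OF alg_K alg_K]])
  then show "tens_eq2 sF sF (\<Delta> (X i j * g)) (map (\<lambda>s. (X i s * g, X s j * g)) [0..<n])"
    by (simp add: tens_mult_single comp_def)
  show "\<epsilon> (X i j * g) = (if i = j then 1 else 0)"
    using X g ij by (simp add: counit_mult multiplicative_matrix_def grouplike_def)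
qed

lemma antipode_twist:
  assumes X: "multiplicative_matrix n X" and g: "grouplike g"
  shows "mat_eq n (mat_map S (\<lambda>i j. X i j * S g)) (\<lambda>i j. g * S (X i j))"
proof (rule mat_inverse_unique)
  show "mat_eq n (mat_mult n (mat_map S (\<lambda>i j. X i j * S g)) (\<lambda>i j. X i j * S g)) (diag_mat 1)"
    by (rule multiplicative_matrix_antipode(2)[OF multiplicative_matrix_twist[OF X grouplike_antipode[OF g]]])
  have cancel: "S g * (g * y) = y" for y
    by (simp add: mult.assoc[symmetric] grouplike_invertible(2)[OF g])
  have "mat_mult n (\<lambda>i j. X i j * S g) (\<lambda>i j. g * S (X i j)) = mat_mult n X (mat_map S X)"
    by (simp add: mat_mult_def mat_map_def mult.assoc cancel)
  then show "mat_eq n (mat_mult n (\<lambda>i j. X i j * S g) (\<lambda>i j. g * S (X i j))) (diag_mat 1)"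
    using multiplicative_matrix_antipode(1)[OF X] by simp
qed

lemma coaction_top_grouplike:
  assumes \<rho>e: "tens_eq2 sF sE (\<rho> e) [(D, e)]" and e: "e \<noteq> 0"
  shows "grouplike D"
  unfolding grouplike_iff_multiplicative
proof (rule coaction_matrix_multiplicative[where v = "\<lambda>_. e"])
  show "module.independent sE ((\<lambda>_. e) ` {..<1::nat})"
    using e by (simp add: vector_space.dependent_single[OF vs_E] lessThan_Suc)
qed (use \<rho>e in \<open>auto simp: lessThan_Suc\<close>)

text \<open>If v i * w j = \<delta> i j e with \<rho> e = D \<otimes> e, the coefficient matrices X of v and Z of w
  satisfy X Z^T = D I: apply \<rho> to the products and use that \<rho> is multiplicative.\<close>

lemma coaction_pairing_matrix:
  assumes \<rho>v: "\<And>i. i < n \<Longrightarrow> tens_eq2 sF sE (\<rho> (v i)) (map (\<lambda>s. (X i s, v s)) [0..<n])"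
    and \<rho>w: "\<And>i. i < n \<Longrightarrow> tens_eq2 sF sE (\<rho> (w i)) (map (\<lambda>s. (Z i s, w s)) [0..<n])"
    and vw: "\<And>i j. i < n \<Longrightarrow> j < n \<Longrightarrow> v i * w j = (if i = j then e else 0)"
    and \<rho>e: "tens_eq2 sF sE (\<rho> e) [(D, e)]" and e: "e \<noteq> 0"
  shows "mat_eq n (mat_mult n X (mat_transpose Z)) (diag_mat D)"
  unfolding mat_eq_def mat_mult_def mat_transpose_def diag_mat_def
proof (intro allI impI)
  fix i j assume i: "i < n" and j: "j < n"
  show "(\<Sum>s<n. X i s * Z j s) = (if i = j then D else 0)"
  proof (rule eq_if_functionals_agree[OF vs_K])
    fix \<phi> assume \<phi>: "Vector_Spaces.linear sF (*) \<phi>"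
    obtain \<chi> where \<chi>: "Vector_Spaces.linear sE (*) (\<chi> e)" and \<chi>e: "\<chi> e e = 1"
      using dual_functionals[OF vs_E, of "{e}"] e by (metis vector_space.dependent_single[OF vs_E] singletonI)
    define \<Omega> where "\<Omega> x = (\<Sum>(a,b)\<leftarrow>\<rho> x. \<phi> a * \<chi> e b)" for x
    have \<Omega>: "Vector_Spaces.linear sE (*) \<Omega>"
      unfolding \<Omega>_def by (rule coaction_functional_linear[OF \<phi> \<chi>])
    have "tens_eq2 sF sE (\<rho> (v i * w j))
        (tens_mult (map (\<lambda>s. (X i s, v s)) [0..<n]) (map (\<lambda>t. (Z j t, w t)) [0..<n]))"
      by (rule tens_eq2_trans[OF coact_mult tens_mult_cong[OF alg_K alg_E \<rho>v[OF i] \<rho>w[OF j]]])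
    then have "\<Omega> (v i * w j) = (\<Sum>s<n. \<Sum>t<n. \<phi> (X i s * Z j t) * \<chi> e (v s * w t))"
      using \<phi> \<chi> unfolding \<Omega>_def tens_eq2_def tens_mult_sum sum_upt_pairs by blast
    also have "\<dots> = (\<Sum>s<n. \<phi> (X i s * Z j s))"
      using vw \<chi>e linear_functional_zero[OF \<chi>]
      by (simp add: if_distrib[of "\<chi> e"] if_distrib[of "(*) _"] cong: if_cong)
    also have "\<dots> = \<phi> (\<Sum>s<n. X i s * Z j s)"
    proof -
      interpret vector_space sF by (rule vs_K)
      show ?thesis using linear_functional_sum_scale[OF \<phi>, of "\<lambda>_. 1" "\<lambda>s. X i s * Z j s" "{..<n}"]
        by simp
    qed
    finally have "\<phi> (\<Sum>s<n. X i s * Z j s) = \<Omega> (v i * w j)" ..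
    also have "\<dots> = \<phi> (if i = j then D else 0)"
    proof (cases "i = j")
      case True
      have "\<Omega> e = \<phi> D" using \<rho>e \<phi> \<chi> \<chi>e unfolding \<Omega>_def tens_eq2_def by auto
      with True show ?thesis using vw i j by simp
    next
      case False
      then show ?thesis using vw i j linear_functional_zero[OF \<Omega>] linear_functional_zero[OF \<phi>] by simp
    qed
    finally show "\<phi> (\<Sum>s<n. X i s * Z j s) = \<phi> (if i = j then D else 0)" .
  qed
qed

lemma antipode_from_pairing:
  assumes X: "multiplicative_matrix n X"
    and XZ: "mat_eq n (mat_mult n X (mat_transpose Z)) (diag_mat g)" and g: "grouplike g"
  shows "mat_eq n (mat_map S X) (\<lambda>i j. Z j i * S g)"
  by (rule left_inverse_from_pairing[OF multiplicative_matrix_antipode(2)[OF X] XZ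
        grouplike_invertible(1)[OF g]])

lemma coaction_matrix_conjugate:
  assumes ind: "module.independent sE (c ` {..<n})" and inj: "inj_on c {..<n}"
    and \<rho>a: "\<And>i. i < n \<Longrightarrow> tens_eq2 sF sE (\<rho> (a i)) (map (\<lambda>s. (Y i s, a s)) [0..<n])"
    and \<rho>c: "\<And>i. i < n \<Longrightarrow> tens_eq2 sF sE (\<rho> (c i)) (map (\<lambda>s. (G i s, c s)) [0..<n])"
    and c_\<alpha>: "\<And>i. i < n \<Longrightarrow> c i = (\<Sum>j<n. sE (\<alpha> i j) (a j))"
    and a_\<beta>: "\<And>i. i < n \<Longrightarrow> a i = (\<Sum>j<n. sE (\<beta> i j) (c j))"
  shows "mat_eq n G (smat_mult_right sF n (smat_mult_left sF n \<alpha> Y) \<beta>)"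
  unfolding mat_eq_def
proof (intro allI impI)
  fix i k assume i: "i < n" and k: "k < n"
  obtain \<chi> where \<chi>: "Vector_Spaces.linear sE (*) (\<chi> k)"
    and dual: "\<And>t. t < n \<Longrightarrow> \<chi> k (c t) = (if t = k then 1 else 0)"
    using coordinate_functionals[OF vs_E ind inj] k by metis
  have \<chi>a: "\<chi> k (a s) = \<beta> s k" if s: "s < n" for s
    unfolding a_\<beta>[OF s] linear_functional_sum_scale[OF \<chi>] using dual k
    by (simp add: if_distrib[of "(*) _"] cong: if_cong)
  show "G i k = smat_mult_right sF n (smat_mult_left sF n \<alpha> Y) \<beta> i k"
  proof (rule eq_if_functionals_agree[OF vs_K])
    fix \<phi> assume \<phi>: "Vector_Spaces.linear sF (*) \<phi>"
    define \<Theta> where "\<Theta> x = (\<Sum>(p,q)\<leftarrow>\<rho> x. \<phi> p * \<chi> k q)" for x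
    have \<Theta>: "Vector_Spaces.linear sE (*) \<Theta>"
      unfolding \<Theta>_def by (rule coaction_functional_linear[OF \<phi> \<chi>])
    have "\<phi> (G i k) = \<Theta> (c i)"
      unfolding \<Theta>_def by (rule coaction_coefficient[OF \<rho>c[OF i] \<phi> \<chi> dual k, symmetric])
    also have "\<dots> = (\<Sum>t<n. \<alpha> i t * \<Theta> (a t))"
      unfolding c_\<alpha>[OF i] by (rule linear_functional_sum_scale[OF \<Theta>])
    also have "\<dots> = (\<Sum>t<n. \<alpha> i t * (\<Sum>s<n. \<phi> (Y t s) * \<beta> s k))"
      using coaction_expand[OF \<rho>a \<phi> \<chi>] \<chi>a unfolding \<Theta>_def by (auto intro!: sum.cong)
    also have "\<dots> = (\<Sum>s<n. \<beta> s k * (\<Sum>t<n. \<alpha> i t * \<phi> (Y t s)))"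
      by (simp add: sum_distrib_left mult_ac) (rule sum.swap)
    also have "\<dots> = \<phi> (smat_mult_right sF n (smat_mult_left sF n \<alpha> Y) \<beta> i k)"
      unfolding smat_mult_right_def smat_mult_left_def
      by (simp add: linear_functional_sum_scale[OF \<phi>])
    finally show "\<phi> (G i k) = \<phi> (smat_mult_right sF n (smat_mult_left sF n \<alpha> Y) \<beta> i k)" .
  qed
qed

end

theorem lemma3p1:
  fixes sF :: "'f::field \<Rightarrow> 'k::ring_1 \<Rightarrow> 'k"
    and \<Delta> :: "'k \<Rightarrow> ('k \<times> 'k) list" and \<epsilon> :: "'k \<Rightarrow> 'f" and S :: "'k \<Rightarrow> 'k"
    and sE :: "'f \<Rightarrow> 'e::ring_1 \<Rightarrow> 'e" and Egr :: "nat \<Rightarrow> 'e set"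
    and \<rho> :: "'e \<Rightarrow> ('k \<times> 'e) list"
    and l n :: nat and e :: 'e and a b c :: "nat \<Rightarrow> 'e"
    and \<alpha> :: "nat \<Rightarrow> nat \<Rightarrow> 'f"
    and Y F G :: "nat \<Rightarrow> nat \<Rightarrow> 'k" and D :: 'k
  assumes hopf: "hopf_algebra sF \<Delta> \<epsilon> S"
    and conn: "connected_graded_algebra sE Egr"
    and frob: "graded_frobenius sE Egr"
    and top: "top_degree Egr l"
    and comod: "graded_comodule_algebra sF \<Delta> \<epsilon> sE Egr \<rho>"
    and e_basis: "is_basis_of sE (Egr l) (\<lambda>_. e) 1"
    and a_basis: "is_basis_of sE (Egr 1) a n"
    and b_basis: "is_basis_of sE (Egr (l - 1)) b n"
    and ab: "\<forall>i<n. \<forall>j<n. a i * b j = (if i = j then e else 0)"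
    and c_basis: "is_basis_of sE (Egr 1) c n"
    and bc: "\<forall>i<n. \<forall>j<n. b i * c j = (if i = j then e else 0)"
    and c_alpha: "\<forall>i<n. c i = (\<Sum>j<n. sE (\<alpha> i j) (a j))"
    and rho_a: "\<forall>i<n. tens_eq2 sF sE (\<rho> (a i)) (map (\<lambda>s. (Y i s, a s)) [0..<n])"
    and rho_b: "\<forall>i<n. tens_eq2 sF sE (\<rho> (b i)) (map (\<lambda>s. (F i s, b s)) [0..<n])"
    and rho_c: "\<forall>i<n. tens_eq2 sF sE (\<rho> (c i)) (map (\<lambda>s. (G i s, c s)) [0..<n])"
    and rho_e: "tens_eq2 sF sE (\<rho> e) [(D, e)]"
  shows
    \<comment> \<open>D is invertible with inverse S D\<close>
    "D * S D = 1 \<and> S D * D = 1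
     \<comment> \<open>(a)\<close>
     \<and> mat_eq n (mat_mult n Y (mat_map S Y)) (diag_mat 1)
     \<and> mat_eq n (mat_mult n (mat_map S Y) Y) (diag_mat 1)
     \<comment> \<open>(b)\<close>
     \<and> mat_eq n (mat_mult n G (mat_map S G)) (diag_mat 1)
     \<and> mat_eq n (mat_mult n (mat_map S G) G) (diag_mat 1)
     \<comment> \<open>(c)\<close>
     \<and> mat_eq n (mat_mult n Y (mat_transpose F)) (diag_mat D)
     \<and> mat_eq n (mat_map S Y) (mat_mult n (mat_transpose F) (diag_mat (S D)))
     \<comment> \<open>(d)\<close>
     \<and> mat_eq n (mat_mult n (mat_map S F) (mat_map S (mat_transpose Y))) (diag_mat (S D))
     \<comment> \<open>(e)\<close>
     \<and> mat_eq n (mat_mult n (mat_map S G) (mat_map S (mat_transpose F))) (diag_mat (S D))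
     \<and> mat_eq n (mat_mult n (mat_map S (mat_transpose F)) (diag_mat D)) G
     \<comment> \<open>(f)\<close>
     \<and> mat_eq n (mat_map (S \<circ> S) Y) (mat_mult n (mat_mult n (diag_mat D) G) (diag_mat (S D)))
     \<comment> \<open>(g): alpha is invertible and G = alpha Y alpha^-1\<close>
     \<and> (\<exists>\<beta>. mat_eq n (mat_mult n \<alpha> \<beta>) (diag_mat 1) \<and> mat_eq n (mat_mult n \<beta> \<alpha>) (diag_mat 1))
     \<and> (\<forall>\<beta>. mat_eq n (mat_mult n \<alpha> \<beta>) (diag_mat 1) \<and> mat_eq n (mat_mult n \<beta> \<alpha>) (diag_mat 1)
            \<longrightarrow> mat_eq n G (smat_mult_right sF n (smat_mult_left sF n \<alpha> Y) \<beta>))"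
proof -
  have alg_E: "algebra_over sE"
    using conn unfolding connected_graded_algebra_def graded_algebra_def by blast
  interpret hopf_comodule sF \<Delta> \<epsilon> S sE Egr \<rho>
    by unfold_locales (rule hopf comod alg_E)+
  have ind_a: "module.independent sE (a ` {..<n})" "inj_on a {..<n}"
    and ind_b: "module.independent sE (b ` {..<n})" "inj_on b {..<n}"
    and ind_c: "module.independent sE (c ` {..<n})" "inj_on c {..<n}"
    and a_span: "\<And>i. i < n \<Longrightarrow> a i \<in> module.span sE (c ` {..<n})"
    using a_basis b_basis c_basis unfolding is_basis_of_def by blast+
  have "e \<noteq> 0"
    using e_basis vector_space.dependent_single[OF vs_E] by (auto simp: is_basis_of_def lessThan_Suc)
  then have gD: "grouplike D" by (rule coaction_top_grouplike[OF rho_e])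
  have mY: "multiplicative_matrix n Y" and mF: "multiplicative_matrix n F" and mG: "multiplicative_matrix n G"
    using coaction_matrix_multiplicative[OF ind_a] coaction_matrix_multiplicative[OF ind_b]
      coaction_matrix_multiplicative[OF ind_c] rho_a rho_b rho_c by simp_all
  have YF: "mat_eq n (mat_mult n Y (mat_transpose F)) (diag_mat D)"
    by (rule coaction_pairing_matrix[OF _ _ _ rho_e \<open>e \<noteq> 0\<close>]) (use rho_a rho_b ab in auto)
  have FG: "mat_eq n (mat_mult n F (mat_transpose G)) (diag_mat D)"
    by (rule coaction_pairing_matrix[OF _ _ _ rho_e \<open>e \<noteq> 0\<close>]) (use rho_b rho_c bc in auto)
  have SY: "mat_eq n (mat_map S Y) (\<lambda>i j. F j i * S D)" by (rule antipode_from_pairing[OF mY YF gD])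
  have SF: "mat_eq n (mat_map S F) (\<lambda>i j. G j i * S D)" by (rule antipode_from_pairing[OF mF FG gD])
  have SSY: "mat_eq n (mat_map (S \<circ> S) Y) (\<lambda>i j. D * (G i j * S D))"
    using SY SF antipode_twist[OF mF gD] by (simp add: mat_eq_def mat_map_def)
  obtain \<beta> where \<alpha>\<beta>: "mat_eq n (mat_mult n \<alpha> \<beta>) (diag_mat 1)" "mat_eq n (mat_mult n \<beta> \<alpha>) (diag_mat 1)"
    by (rule transition_matrix_invertible[OF vs_E ind_a ind_c a_span c_alpha[rule_format]])
  have conj: "mat_eq n G (smat_mult_right sF n (smat_mult_left sF n \<alpha> Y) \<beta>')"
    if "mat_eq n (mat_mult n \<beta>' \<alpha>) (diag_mat 1)" for \<beta>'
    by (rule coaction_matrix_conjugate[OF ind_c rho_a[rule_format] rho_c[rule_format]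
          c_alpha[rule_format] inverse_transition_expansion[OF vs_E c_alpha[rule_format] that]])
  show ?thesis
    using grouplike_invertible[OF gD] multiplicative_matrix_antipode[OF mY] multiplicative_matrix_antipode[OF mG]
  proof (intro conjI)
    show "mat_eq n (mat_map S Y) (mat_mult n (mat_transpose F) (diag_mat (S D)))"
      using SY by (simp add: mat_eq_def mat_transpose_def)
    show "mat_eq n (mat_mult n (mat_map S F) (mat_map S (mat_transpose Y))) (diag_mat (S D))"
      using SY by (intro mat_mult_scaled_inverse[OF multiplicative_matrix_antipode(2)[OF mF]])
        (simp add: mat_eq_def mat_map_def mat_transpose_def)
    show "mat_eq n (mat_mult n (mat_map S G) (mat_map S (mat_transpose F))) (diag_mat (S D))"
      using SF by (intro mat_mult_scaled_inverse[OF multiplicative_matrix_antipode(2)[OF mG]])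
        (simp add: mat_eq_def mat_map_def mat_transpose_def)
    show "mat_eq n (mat_mult n (mat_map S (mat_transpose F)) (diag_mat D)) G"
      using SF grouplike_invertible(2)[OF gD] by (simp add: mat_eq_def mat_map_def mat_transpose_def mult.assoc)
    show "mat_eq n (mat_map (S \<circ> S) Y) (mat_mult n (mat_mult n (diag_mat D) G) (diag_mat (S D)))"
      using SSY by (simp add: mat_eq_def mult.assoc)
  qed (use YF \<alpha>\<beta> conj in auto)
qed

end
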